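(* Let $s\ge 3$ be an integer. Then $$T_s=B_0\cup B_1\cup\cdots\cup B_{\lfloor s/2\rfloor-1},\qquad B_k=\{1+k(s+2),\,2+k(s+2),\,\ldots,\,(k+1)s-1\},$$ and $T_s$ is a graded poset of length $\lfloor s/2\rfloor-1$ whose elements of rank $k$ are exactly those of $B_k$. Moreover, for $1\le k\le\lfloor s/2\rfloor-1$, each element $b\in B_k$ covers exactly the three elements $b-s,\ b-(s+1),\ b-(s+2)$, all of which lie in $B_{k-1}$ (and the elements of $B_0$ are exactly the minimal elements).
   Context: For a positive integer $s$, $T_s=P_{(s,s+1,s+2)}$ denotes the set of positive integers that cannot be written as $k_1s+k_2(s+1)+k_3(s+2)$ with $k_1,k_2,k_3$ nonnegative integers, partially ordered by: $y\ge x$ iff there exist $y=y_0,y_1,\ldots,y_l=x$, all in $T_s$, with $y_i-y_{i+1}\in\{s,s+1,s+2\}$ for all $i$. For a poset, $y$ covers $x$ if $x<y$ and there is no $z$ with $x<z<y$. *)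

theory Defs
  imports Main
begin

definition repr3 :: "nat \<Rightarrow> nat \<Rightarrow> bool" where
  "repr3 s n \<longleftrightarrow> (\<exists>k1 k2 k3. n = k1 * s + k2 * (s + 1) + k3 * (s + 2))"

definition Tset :: "nat \<Rightarrow> nat set" where
  "Tset s = {n. 0 < n \<and> \<not> repr3 s n}"

definition Tstep :: "nat \<Rightarrow> nat \<Rightarrow> nat \<Rightarrow> bool" where
  "Tstep s y x \<longleftrightarrow> y \<in> Tset s \<and> x \<in> Tset s \<and>
     (y = x + s \<or> y = x + (s + 1) \<or> y = x + (s + 2))"

definition Tle :: "nat \<Rightarrow> nat \<Rightarrow> nat \<Rightarrow> bool" where
  "Tle s x y \<longleftrightarrow> x \<in> Tset s \<and> y \<in> Tset s \<and> (Tstep s)\<^sup>*\<^sup>* y x"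

definition Tlt :: "nat \<Rightarrow> nat \<Rightarrow> nat \<Rightarrow> bool" where
  "Tlt s x y \<longleftrightarrow> Tle s x y \<and> x \<noteq> y"

definition Trel :: "nat \<Rightarrow> (nat \<times> nat) set" where
  "Trel s = {(x, y). Tle s x y}"

definition Tcovers :: "nat \<Rightarrow> nat \<Rightarrow> nat \<Rightarrow> bool" where
  "Tcovers s y x \<longleftrightarrow> Tlt s x y \<and> \<not> (\<exists>z. Tlt s x z \<and> Tlt s z y)"

definition Tminimal :: "nat \<Rightarrow> nat \<Rightarrow> bool" where
  "Tminimal s x \<longleftrightarrow> x \<in> Tset s \<and> \<not> (\<exists>z. Tlt s z x)"

definition Tchain :: "nat \<Rightarrow> nat set \<Rightarrow> bool" where
  "Tchain s C \<longleftrightarrow> C \<subseteq> Tset s \<and> (\<forall>x\<in>C. \<forall>y\<in>C. Tle s x y \<or> Tle s y x)"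

definition Tmaxchain :: "nat \<Rightarrow> nat set \<Rightarrow> bool" where
  "Tmaxchain s C \<longleftrightarrow> Tchain s C \<and> \<not> (\<exists>D. Tchain s D \<and> C \<subset> D)"

text \<open>Graded of length L (every maximal chain is finite with L+1 elements, i.e. has
  length L) with rank function rho: minimal elements have rank 0 and ranks increase
  by one along cover relations.\<close>
definition graded_with_rank :: "nat \<Rightarrow> nat \<Rightarrow> (nat \<Rightarrow> nat) \<Rightarrow> bool" where
  "graded_with_rank s L \<rho> \<longleftrightarrow>
     (\<forall>C. Tmaxchain s C \<longrightarrow> finite C \<and> card C = L + 1) \<and>
     (\<forall>x. Tminimal s x \<longrightarrow> \<rho> x = 0) \<and>
     (\<forall>x y. Tcovers s y x \<longrightarrow> \<rho> y = \<rho> x + 1)"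

definition Bblock :: "nat \<Rightarrow> nat \<Rightarrow> nat set" where
  "Bblock s k = {1 + k * (s + 2) .. (k + 1) * s - 1}"

end

theory Submission
  imports Defs
begin

(* A number n is a nonnegative combination of s, s+1, s+2 iff
   m*s <= n <= m*(s+2) for some m.  Writing n = q*(s+2) + r with 0 <= r < s+2,
   this shows that n is a gap iff 1 <= r and r + 2q + 1 <= s, i.e. iff n lies in
   the block B_q; hence T_s is the union of the blocks and q = n div (s+2) is the
   natural rank function.  A single step y -> x of the order (y - x in
   {s, s+1, s+2}, both gaps) raises the rank by exactly one, so the relation is a
   partial order whose strict part strictly increases the rank.  Consequently the
   cover relation is exactly the single step, the minimal elements are B_0, and
   from each block one can step down into the previous block and up into the next.
   Finally every maximal chain meets each rank 0, ..., s div 2 - 1: if a rank k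
   were missed, take the chain elements a just below and b just above rank k:
   a < b is not a cover, b is not minimal, a can be stepped up, or the chain is
   empty -- in each case a new element comparable with the whole chain exists,
   contradicting maximality. *)

abbreviation rank :: "nat \<Rightarrow> nat \<Rightarrow> nat" where
  "rank s x \<equiv> x div (s + 2)"

section \<open>Arithmetic description of the gaps\<close>

lemma repr3_iff: "repr3 s n \<longleftrightarrow> (\<exists>m. m * s \<le> n \<and> n \<le> m * (s + 2))"
proof
  assume "repr3 s n"
  then obtain k1 k2 k3 where n: "n = k1 * s + k2 * (s + 1) + k3 * (s + 2)"
    unfolding repr3_def by blast
  show "\<exists>m. m * s \<le> n \<and> n \<le> m * (s + 2)"
    by (rule exI[of _ "k1 + k2 + k3"]) (simp add: n algebra_simps)
next
  assume "\<exists>m. m * s \<le> n \<and> n \<le> m * (s + 2)"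
  then obtain m where m: "m * s \<le> n" "n \<le> m * (s + 2)" by blast
  text \<open>Write the excess n - m s as 2a + b with b \<le> 1 and use a copies of s+2,
    b copies of s+1 and the remaining m - a - b copies of s.\<close>
  define a where "a = (n - m * s) div 2"
  define b where "b = (n - m * s) mod 2"
  have "n - m * s \<le> 2 * m" "n - m * s = 2 * a + b" "b \<le> 1"
    using m by (auto simp: a_def b_def algebra_simps)
  hence excess: "n = m * s + 2 * a + b" "a + b \<le> m"
    using m by linarith+
  then obtain c where c: "m = c + a + b" by (intro that[of "m - a - b"]) simp
  show "repr3 s n" unfolding repr3_def
    by (rule exI[of _ c], rule exI[of _ b], rule exI[of _ a])
      (simp add: excess(1) c algebra_simps)
qed

lemma Tset_iff:
  "n \<in> Tset s \<longleftrightarrow> 1 \<le> n mod (s + 2) \<and> n mod (s + 2) + 2 * rank s n + 1 \<le> s"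
proof -
  define q where "q = rank s n"
  define r where "r = n mod (s + 2)"
  have n: "n = q * s + 2 * q + r"
    using div_mult_mod_eq[of n "s + 2"] by (simp add: q_def r_def algebra_simps)
  have r_less: "r < s + 2" by (simp add: r_def)
  show ?thesis unfolding q_def[symmetric] r_def[symmetric]
  proof
    assume "n \<in> Tset s"
    hence not_repr: "\<not> (\<exists>m. m * s \<le> n \<and> n \<le> m * (s + 2))"
      by (auto simp: Tset_def repr3_iff)
    text \<open>Otherwise n would lie in the interval for m = q resp. m = q + 1.\<close>
    have "r \<noteq> 0"
    proof
      assume "r = 0"
      hence "q * s \<le> n \<and> n \<le> q * (s + 2)" using n by (simp add: algebra_simps)
      thus False using not_repr by blast
    qed
    moreover have "r + 2 * q + 1 \<le> s"
    proof (rule ccontr)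
      assume "\<not> ?thesis"
      hence "(q + 1) * s \<le> n \<and> n \<le> (q + 1) * (s + 2)"
        using n r_less by (simp add: algebra_simps)
      thus False using not_repr by blast
    qed
    ultimately show "1 \<le> r \<and> r + 2 * q + 1 \<le> s" by simp
  next
    assume r: "1 \<le> r \<and> r + 2 * q + 1 \<le> s"
    text \<open>n lies strictly between the intervals for m = q and m = q + 1.\<close>
    have "\<not> repr3 s n"
    proof
      assume "repr3 s n"
      then obtain m where m: "m * s \<le> n" "n \<le> m * (s + 2)" by (auto simp: repr3_iff)
      show False
      proof (cases "m \<le> q")
        case True
        hence "m * (s + 2) \<le> q * (s + 2)" by (rule mult_le_mono1)
        thus False using m n r by (simp add: algebra_simps)
      next
        case False
        hence "(q + 1) * s \<le> m * s" by (intro mult_le_mono1) simp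
        thus False using m n r by (simp add: algebra_simps)
      qed
    qed
    thus "n \<in> Tset s" using n r by (simp add: Tset_def)
  qed
qed

lemma Bblock_iff: "x \<in> Bblock s k \<longleftrightarrow> x \<in> Tset s \<and> rank s x = k"
proof
  assume "x \<in> Bblock s k"
  hence bounds: "1 + k * s + 2 * k \<le> x" "x + 1 \<le> k * s + s"
    by (auto simp: Bblock_def algebra_simps)
  have rk: "rank s x = k"
    by (rule div_nat_eqI) (use bounds in \<open>auto simp: algebra_simps\<close>)
  have "x mod (s + 2) = x - (k * s + 2 * k)"
    using rk div_mult_mod_eq[of x "s + 2"] by (simp add: algebra_simps)
  hence "1 \<le> x mod (s + 2) \<and> x mod (s + 2) + 2 * rank s x + 1 \<le> s"
    using rk bounds by linarith
  thus "x \<in> Tset s \<and> rank s x = k" using rk by (simp add: Tset_iff)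
next
  assume x: "x \<in> Tset s \<and> rank s x = k"
  have "x = k * s + 2 * k + x mod (s + 2)"
    using div_mult_mod_eq[of x "s + 2"] x by (simp add: algebra_simps)
  moreover have "(k + 1) * s = k * s + s" "k * (s + 2) = k * s + 2 * k"
    by (simp_all add: algebra_simps)
  ultimately have "1 + k * (s + 2) \<le> x \<and> x \<le> (k + 1) * s - 1"
    using x Tset_iff[of x s] by linarith
  thus "x \<in> Bblock s k" by (simp add: Bblock_def)
qed

lemma rank_bound: "x \<in> Tset s \<Longrightarrow> 2 * rank s x + 2 \<le> s"
  using Tset_iff[of x s] by linarith

lemma rank_in_range: "2 * k + 2 \<le> s \<Longrightarrow> k \<in> {0 .. s div 2 - 1}" for k s :: nat
  by simp

lemma rank_in_range_iff: "2 \<le> s \<Longrightarrow> k \<in> {0 .. s div 2 - 1} \<longleftrightarrow> 2 * k + 2 \<le> s"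
  for k s :: nat
  by (rule iffI) (simp_all add: rank_in_range)

lemma Tset_blocks: "Tset s = (\<Union>k \<in> {0 .. s div 2 - 1}. Bblock s k)"
proof
  show "Tset s \<subseteq> (\<Union>k \<in> {0 .. s div 2 - 1}. Bblock s k)"
  proof
    fix x assume "x \<in> Tset s"
    hence "rank s x \<in> {0 .. s div 2 - 1}" "x \<in> Bblock s (rank s x)"
      using rank_bound rank_in_range Bblock_iff by blast+
    thus "x \<in> (\<Union>k \<in> {0 .. s div 2 - 1}. Bblock s k)" by blast
  qed
qed (use Bblock_iff in blast)

section \<open>Steps between blocks\<close>

lemma Tstep_rank:
  assumes step: "Tstep s y x"
  shows "rank s y = rank s x + 1"
proof -
  define qx rx qy ry
    where "qx = rank s x" "rx = x mod (s + 2)" "qy = rank s y" "ry = y mod (s + 2)"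
  have x: "x = qx * (s + 2) + rx" and y: "y = qy * (s + 2) + ry"
    using div_mult_mod_eq[of x "s + 2"] div_mult_mod_eq[of y "s + 2"]
    by (simp_all add: qx_rx_qy_ry_def)
  have gaps: "1 \<le> rx" "rx + 2 * qx + 1 \<le> s" "1 \<le> ry" "ry + 2 * qy + 1 \<le> s"
    using step Tset_iff[of x s] Tset_iff[of y s]
    unfolding Tstep_def qx_rx_qy_ry_def by auto
  have diff: "y = x + s \<or> y = x + (s + 1) \<or> y = x + (s + 2)"
    using step by (auto simp: Tstep_def)
  consider "qy \<le> qx" | "qy = qx + 1" | "qx + 2 \<le> qy" by linarith
  then have "qy = qx + 1"
  proof cases
    case 1
    then have "qy * (s + 2) \<le> qx * (s + 2)" by (rule mult_le_mono1)
    then show ?thesis using x y gaps diff by linarith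
  next
    case 3
    then have "(qx + 2) * (s + 2) \<le> qy * (s + 2)" by (rule mult_le_mono1)
    moreover have "(qx + 2) * (s + 2) = qx * (s + 2) + 2 * s + 4" by (simp add: algebra_simps)
    ultimately show ?thesis using x y gaps diff by linarith
  qed
  thus ?thesis by (simp add: qx_rx_qy_ry_def)
qed

lemma block_down:
  assumes k: "1 \<le> k" and x: "x \<in> Bblock s k" and d: "d \<in> {s, s + 1, s + 2}"
  shows "d \<le> x \<and> x - d \<in> Bblock s (k - 1)"
proof -
  obtain j where kj: "k = Suc j" using k not0_implies_Suc by fastforce
  have bounds: "1 + k * (s + 2) \<le> x" "x \<le> (k + 1) * s - 1" using x by (auto simp: Bblock_def)
  have "(k + 1) * s = j * s + 2 * s" "k * (s + 2) = j * s + 2 * j + s + 2"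
    "(j + 1) * s = j * s + s" "j * (s + 2) = j * s + 2 * j"
    by (simp_all add: kj algebra_simps)
  hence "d \<le> x \<and> 1 + j * (s + 2) \<le> x - d \<and> x - d \<le> (j + 1) * s - 1"
    using bounds d by auto
  thus ?thesis by (simp add: Bblock_def kj)
qed

lemma block_up:
  assumes x: "x \<in> Bblock s k" and k: "2 * k + 4 \<le> s"
  shows "\<exists>y \<in> Bblock s (k + 1). Tstep s y x"
proof -
  have eqs: "(k + 1) * s = k * s + s" "k * (s + 2) = k * s + 2 * k"
    "(k + 1 + 1) * s = k * s + 2 * s" "(k + 1) * (s + 2) = k * s + 2 * k + s + 2"
    by (simp_all add: algebra_simps)
  have bounds: "1 + k * s + 2 * k \<le> x" "x + 1 \<le> k * s + s"
    using x k unfolding Bblock_def eqs by auto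
  text \<open>Go up by s + 2, unless that overshoots the top of B_(k+1).\<close>
  define y where "y = min (x + s + 2) (k * s + 2 * s - 1)"
  have y: "1 + k * s + s + 2 * k + 2 \<le> y" "y + 1 \<le> k * s + 2 * s" "x + s \<le> y" "y \<le> x + s + 2"
    using bounds k by (auto simp: y_def)
  have yB: "y \<in> Bblock s (k + 1)" unfolding Bblock_def using y eqs by simp
  have "y = x + s \<or> y = x + (s + 1) \<or> y = x + (s + 2)" using y by linarith
  thus ?thesis using yB x Bblock_iff by (auto simp: Tstep_def)
qed

section \<open>The order relation\<close>

lemma Tle_refl: "x \<in> Tset s \<Longrightarrow> Tle s x x"
  by (simp add: Tle_def)

lemma Tle_trans: "Tle s x y \<Longrightarrow> Tle s y z \<Longrightarrow> Tle s x z"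
  unfolding Tle_def by (meson rtranclp_trans)

lemma Tle_rank:
  assumes "Tle s x y" shows "x = y \<or> rank s x < rank s y"
proof -
  have "(Tstep s)\<^sup>*\<^sup>* y x" using assms by (simp add: Tle_def)
  thus ?thesis
  proof (induction rule: converse_rtranclp_induct)
    case (step y z) thus ?case using Tstep_rank[of s y z] by auto
  qed simp
qed

lemma Tlt_rank: "Tlt s x y \<Longrightarrow> rank s x < rank s y"
  using Tle_rank by (auto simp: Tlt_def)

lemma Tstep_Tlt: "Tstep s y x \<Longrightarrow> Tlt s x y"
  using Tstep_rank[of s y x]
  by (auto simp: Tlt_def Tle_def Tstep_def intro: r_into_rtranclp[of "Tstep s"])

lemma Tlt_Tset: "Tlt s x y \<Longrightarrow> x \<in> Tset s \<and> y \<in> Tset s"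
  by (simp add: Tlt_def Tle_def)

lemma partial_order_Trel: "partial_order_on (Tset s) (Trel s)"
  unfolding partial_order_on_def preorder_on_def
proof (intro conjI refl_onI transI antisymI)
  show "Trel s \<subseteq> Tset s \<times> Tset s" by (auto simp: Trel_def Tle_def)
  show "\<And>x. x \<in> Tset s \<Longrightarrow> (x, x) \<in> Trel s" by (simp add: Trel_def Tle_refl)
  show "\<And>x y z. (x, y) \<in> Trel s \<Longrightarrow> (y, z) \<in> Trel s \<Longrightarrow> (x, z) \<in> Trel s"
    by (auto simp: Trel_def intro: Tle_trans)
  fix x y assume "(x, y) \<in> Trel s" "(y, x) \<in> Trel s"
  thus "x = y" using Tle_rank[of s x y] Tle_rank[of s y x] by (auto simp: Trel_def)
qed

text \<open>Covers are exactly the single steps: a longer path passes through an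
  intermediate element, while a single step leaves no rank in between.\<close>
lemma Tcovers_iff_Tstep: "Tcovers s y x \<longleftrightarrow> Tstep s y x"
proof
  assume "Tcovers s y x"
  hence lt: "Tlt s x y" and no_between: "\<not> (\<exists>z. Tlt s x z \<and> Tlt s z y)"
    by (auto simp: Tcovers_def)
  from lt have path: "(Tstep s)\<^sup>*\<^sup>* y x" and "x \<in> Tset s" "x \<noteq> y"
    by (auto simp: Tlt_def Tle_def)
  from path show "Tstep s y x"
  proof (cases rule: converse_rtranclpE)
    case base with \<open>x \<noteq> y\<close> show ?thesis by simp
  next
    case (step z)
    have "z \<in> Tset s" using step(1) by (auto simp: Tstep_def)
    hence "z \<noteq> x \<Longrightarrow> Tlt s x z" using step(2) \<open>x \<in> Tset s\<close> by (auto simp: Tlt_def Tle_def)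
    with no_between Tstep_Tlt[OF step(1)] show ?thesis using step(1) by blast
  qed
next
  assume step: "Tstep s y x"
  have "\<not> (Tlt s x z \<and> Tlt s z y)" for z
    using Tlt_rank[of s x z] Tlt_rank[of s z y] Tstep_rank[OF step] by linarith
  thus "Tcovers s y x" using Tstep_Tlt[OF step] by (auto simp: Tcovers_def)
qed

lemma Tminimal_iff: "Tminimal s x \<longleftrightarrow> x \<in> Bblock s 0"
proof
  assume min: "Tminimal s x"
  show "x \<in> Bblock s 0"
  proof (rule ccontr)
    assume "x \<notin> Bblock s 0"
    hence "1 \<le> rank s x" "x \<in> Bblock s (rank s x)"
      using min Bblock_iff by (auto simp: Tminimal_def)
    from block_down[OF this, of s] have "Tstep s x (x - s)"
      using min Bblock_iff by (auto simp: Tstep_def Tminimal_def)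
    thus False using min Tstep_Tlt by (auto simp: Tminimal_def)
  qed
next
  assume "x \<in> Bblock s 0"
  thus "Tminimal s x" using Bblock_iff Tlt_rank by (fastforce simp: Tminimal_def)
qed

lemma covers_of_block:
  assumes k: "1 \<le> k" and b: "b \<in> Bblock s k"
  shows "{x. Tcovers s b x} = {b - s, b - (s + 1), b - (s + 2)}
    \<and> {b - s, b - (s + 1), b - (s + 2)} \<subseteq> Bblock s (k - 1)"
proof
  have down: "d \<le> b \<and> b - d \<in> Bblock s (k - 1)" if "d \<in> {s, s + 1, s + 2}" for d
    using block_down[OF k b that] .
  show below: "{b - s, b - (s + 1), b - (s + 2)} \<subseteq> Bblock s (k - 1)"
    using down by auto
  have "Tstep s b x \<longleftrightarrow> x \<in> {b - s, b - (s + 1), b - (s + 2)}" for x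
  proof
    assume "x \<in> {b - s, b - (s + 1), b - (s + 2)}"
    moreover have "s + 2 \<le> b" using down by auto
    ultimately show "Tstep s b x"
      using below b Bblock_iff by (auto simp: Tstep_def)
  qed (auto simp: Tstep_def)
  thus "{x. Tcovers s b x} = {b - s, b - (s + 1), b - (s + 2)}"
    by (auto simp: Tcovers_iff_Tstep)
qed

section \<open>Maximal chains\<close>

lemma chain_rank_le:
  assumes "Tchain s C" "c \<in> C" "d \<in> C" "rank s c \<le> rank s d"
  shows "Tle s c d"
  using assms Tle_rank[of s d c] Tle_refl[of c s] by (auto simp: Tchain_def)

lemma maxchain_comparable_mem:
  assumes "Tmaxchain s C" "z \<in> Tset s" "\<forall>c\<in>C. Tle s c z \<or> Tle s z c"
  shows "z \<in> C"
proof -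
  have "Tchain s (insert z C)"
    using assms Tle_refl by (auto simp: Tmaxchain_def Tchain_def)
  thus ?thesis using assms(1) by (auto simp: Tmaxchain_def)
qed

lemma maxchain_meets_rank:
  assumes mc: "Tmaxchain s C" and k: "2 * k + 2 \<le> s"
  shows "\<exists>c\<in>C. rank s c = k"
proof (rule ccontr)
  assume miss: "\<not> ?thesis"
  have ch: "Tchain s C" using mc by (simp add: Tmaxchain_def)
  define A where "A = {c \<in> C. rank s c < k}"
  define U where "U = {c \<in> C. k < rank s c}"
  have C: "C = A \<union> U" using miss by (auto simp: A_def U_def)
  text \<open>The highest chain element below rank k and the lowest one above it.\<close>
  obtain a where a: "A \<noteq> {} \<Longrightarrow> a \<in> A \<and> (\<forall>c\<in>A. rank s c \<le> rank s a)"
  proof (cases "A = {}")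
    case False
    then obtain u where "u \<in> A" by blast
    moreover have "\<forall>c. c \<in> A \<longrightarrow> rank s c < k" by (simp add: A_def)
    ultimately show thesis using ex_has_greatest_nat[of "\<lambda>c. c \<in> A" u "rank s" k] that by blast
  qed (use that in blast)
  obtain b where b: "U \<noteq> {} \<Longrightarrow> b \<in> U \<and> (\<forall>c\<in>U. rank s b \<le> rank s c)"
  proof (cases "U = {}")
    case False
    then obtain u where "u \<in> U" by blast
    from ex_has_least_nat[of "\<lambda>c. c \<in> U" u "rank s", OF this] show thesis using that by blast
  qed (use that in blast)
  text \<open>Maximality fails: there is room for a new element strictly between them.\<close>
  obtain z where z: "z \<in> Tset s" "A \<noteq> {} \<Longrightarrow> Tlt s a z" "U \<noteq> {} \<Longrightarrow> Tlt s z b"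
  proof (cases "A = {}"; cases "U = {}")
    assume "A = {}" "U = {}"
    moreover have "1 \<in> Tset s" using k by (simp add: Tset_iff)
    ultimately show thesis using that by blast
  next
    assume "A = {}" "U \<noteq> {}"
    hence "b \<in> Tset s" "\<not> Tminimal s b"
      using b ch Tminimal_iff Bblock_iff by (auto simp: U_def Tchain_def)
    then obtain z where "Tlt s z b" by (auto simp: Tminimal_def)
    thus thesis using that \<open>A = {}\<close> Tlt_Tset by blast
  next
    assume "A \<noteq> {}" "U = {}"
    hence "a \<in> Bblock s (rank s a)" "2 * rank s a + 4 \<le> s"
      using a k ch Bblock_iff by (auto simp: A_def Tchain_def)
    then obtain y where "Tstep s y a" using block_up by blast
    thus thesis using that \<open>U = {}\<close> Tstep_Tlt Tlt_Tset by blast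
  next
    assume "A \<noteq> {}" "U \<noteq> {}"
    hence ab: "a \<in> C" "b \<in> C" "rank s a < k" "k < rank s b"
      using a b by (auto simp: A_def U_def)
    hence "Tlt s a b" using chain_rank_le[OF ch, of a b] by (auto simp: Tlt_def)
    moreover have "\<not> Tcovers s b a"
      using ab Tstep_rank[of s b a] by (auto simp: Tcovers_iff_Tstep)
    ultimately obtain z where "Tlt s a z" "Tlt s z b" by (auto simp: Tcovers_def)
    thus thesis using that Tlt_Tset by blast
  qed
  have "\<forall>c\<in>C. Tle s c z \<or> Tle s z c"
  proof
    fix c assume "c \<in> C"
    show "Tle s c z \<or> Tle s z c"
    proof (cases "c \<in> A")
      case True
      hence "a \<in> C" "rank s c \<le> rank s a" using a by (auto simp: A_def)
      hence "Tle s c a" using chain_rank_le[OF ch \<open>c \<in> C\<close>] by blast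
      moreover have "Tle s a z" using z(2) True by (auto simp: Tlt_def)
      ultimately show ?thesis using Tle_trans by blast
    next
      case False
      hence "c \<in> U" using C \<open>c \<in> C\<close> by blast
      hence "b \<in> C" "rank s b \<le> rank s c" using b by (auto simp: U_def)
      hence "Tle s b c" using chain_rank_le[OF ch _ \<open>c \<in> C\<close>] by blast
      moreover have "Tle s z b" using z(3) \<open>c \<in> U\<close> by (auto simp: Tlt_def)
      ultimately show ?thesis using Tle_trans by blast
    qed
  qed
  hence "z \<in> C" using maxchain_comparable_mem[OF mc z(1)] by blast
  hence "z \<in> A \<or> z \<in> U" using C by blast
  thus False
  proof
    assume "z \<in> A"
    hence "rank s z \<le> rank s a" "rank s a < rank s z" using a z(2) Tlt_rank by blast+
    thus False by simp
  next
    assume "z \<in> U"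
    hence "rank s b \<le> rank s z" "rank s z < rank s b" using b z(3) Tlt_rank by blast+
    thus False by simp
  qed
qed

text \<open>Hence the rank is a bijection from a maximal chain onto {0 .. s div 2 - 1}.\<close>
lemma maxchain_card:
  assumes s: "2 \<le> s" and mc: "Tmaxchain s C"
  shows "finite C \<and> card C = s div 2 - 1 + 1"
proof -
  have ch: "Tchain s C" using mc by (simp add: Tmaxchain_def)
  have inj: "inj_on (rank s) C"
    using chain_rank_le[OF ch] Tle_rank by (intro inj_onI) (metis order.refl less_irrefl)
  have "rank s ` C \<subseteq> {0 .. s div 2 - 1}"
    using ch rank_bound rank_in_range by (auto simp: Tchain_def)
  moreover have "{0 .. s div 2 - 1} \<subseteq> rank s ` C"
    using maxchain_meets_rank[OF mc] rank_in_range_iff[OF s] by force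
  ultimately have "rank s ` C = {0 .. s div 2 - 1}" by (rule equalityI)
  moreover have "finite C"
    using calculation inj by (metis finite_atLeastAtMost finite_imageD)
  ultimately show ?thesis using card_image[OF inj] by simp
qed

theorem theorem2p3:
  fixes s :: nat
  assumes "s \<ge> 3"
  shows "Tset s = (\<Union>k \<in> {0 .. s div 2 - 1}. Bblock s k)
    \<and> partial_order_on (Tset s) (Trel s)
    \<and> (\<exists>\<rho>. graded_with_rank s (s div 2 - 1) \<rho>
          \<and> (\<forall>k. \<forall>x \<in> Tset s. \<rho> x = k \<longleftrightarrow> x \<in> Bblock s k))
    \<and> (\<forall>k b. 1 \<le> k \<and> k \<le> s div 2 - 1 \<and> b \<in> Bblock s k \<longrightarrow>
          {x. Tcovers s b x} = {b - s, b - (s + 1), b - (s + 2)}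
          \<and> {b - s, b - (s + 1), b - (s + 2)} \<subseteq> Bblock s (k - 1))
    \<and> {x. Tminimal s x} = Bblock s 0"
proof (intro conjI)
  have "2 \<le> s" using assms by simp
  hence "graded_with_rank s (s div 2 - 1) (rank s)"
    unfolding graded_with_rank_def
    using maxchain_card Tminimal_iff Bblock_iff Tcovers_iff_Tstep Tstep_rank by blast
  thus "\<exists>\<rho>. graded_with_rank s (s div 2 - 1) \<rho>
          \<and> (\<forall>k. \<forall>x \<in> Tset s. \<rho> x = k \<longleftrightarrow> x \<in> Bblock s k)"
    using Bblock_iff by blast
  show "\<forall>k b. 1 \<le> k \<and> k \<le> s div 2 - 1 \<and> b \<in> Bblock s k \<longrightarrow>
          {x. Tcovers s b x} = {b - s, b - (s + 1), b - (s + 2)}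
          \<and> {b - s, b - (s + 1), b - (s + 2)} \<subseteq> Bblock s (k - 1)"
    using covers_of_block by blast
qed (use Tset_blocks partial_order_Trel Tminimal_iff in auto)

end
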